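(* In the block regularized minimum distance (RMD) setting of the context, suppose conditions (B1)–(B4) hold. If $\|\boldsymbol\theta_0\|_1^{(d,\tilde d)}\le K$ and the regularization parameter satisfies $\gamma_n\lesssim(K+1)\epsilon_{n1}+\epsilon_2$, then with probability at least $1-(\delta_{n1}+\delta_{n2})$ the block RMD estimator $\widehat{\boldsymbol\theta}$ satisfies $$\|\widehat{\boldsymbol\theta}-\boldsymbol\theta_0\|_1^{(d,\tilde d)}\lesssim s\mu^{-2}\{(K+1)\epsilon_{n1}+\epsilon_2\}.$$
   Context: Block norms: for a block matrix $\mathbf B=(\mathbf B_{ij})_{i\in[N_1],j\in[N_2]}$ with blocks $\mathbf B_{ij}\in\mathbb R^{m_1\times m_2}$, $\|\mathbf B\|^{(m_1,m_2)}_{\max}=\max_{i,j}\|\mathbf B_{ij}\|_F$; if $N_2=1$, $\|\mathbf B\|^{(m_1,m_2)}_1=\sum_i\|\mathbf B_i\|_F$. Setting: integers $p,d,\tilde d,L\ge1$, $q=pL$. The unknown $\boldsymbol\theta_0=(\boldsymbol\theta_{01}^{\mathrm T},\dots,\boldsymbol\theta_{0p}^{\mathrm T})^{\mathrm T}\in\mathbb R^{pd\times\tilde d}$, $\boldsymbol\theta_{0j}\in\mathbb R^{d\times\tilde d}$, is block $s$-sparse: $S=\{j:\|\boldsymbol\theta_{0j}\|_F\ne0\}$, $s=|S|$. There are a matrix $\mathbf G\in\mathbb R^{qd\times pd}$ (viewed as $q\times p$ blocks of size $d\times d$), $\mathbf g(\mathbf 0)\in\mathbb R^{qd\times\tilde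 d}$ and a bias $\mathbf R\in\mathbb R^{qd\times\tilde d}$ with $\mathbf G\boldsymbol\theta_0+\mathbf g(\mathbf 0)+\mathbf R=\mathbf 0$; write $\mathbf g(\boldsymbol\theta)=\mathbf G\boldsymbol\theta+\mathbf g(\mathbf 0)$. Given random empirical versions $\widehat{\mathbf G},\widehat{\mathbf g}(\mathbf 0)$ and $\widehat{\mathbf g}(\boldsymbol\theta)=\widehat{\mathbf G}\boldsymbol\theta+\widehat{\mathbf g}(\mathbf 0)$, the block RMD estimator is a solution $$\widehat{\boldsymbol\theta}\in\arg\min_{\boldsymbol\theta\in\mathbb R^{pd\times\tilde d}}\|\boldsymbol\theta\|_1^{(d,\tilde d)}\ \text{ subject to }\ \|\widehat{\mathbf g}(\boldsymbol\theta)\|^{(d,\tilde d)}_{\max}\le\gamma_n,$$ with $\gamma_n\ge0$. For $J\subset[q]$, $M\subset[p]$, $\mathbf G_{J,M}$ is the block submatrix with block rows in $J$ and block columns in $M$; $\sigma_{\min}(m,\mathbf G)=\min_{|M|\le m}\max_{|J|\le m}\sigma_{\min}(\mathbf G_{J,M})$ and $\sigma_{\max}(m,\mathbf G)=\max_{|M|\le m}\max_{|J|\le m}\sigma_{\max}(\mathbf G_{J,M})$, where $\sigma_{\min},\sigma_{\max}$ denote smallest and largest singular values. Conditions: (B1) there are $\epsilon_{n1},\delta_{n1}>0$ with $\|\widehat{\mathbf G}-\mathbf G\|^{(d,d)}_{\max}\vee\|\widehat{\mathbf g}(\mathbf 0)-\mathbf g(\mathbf 0)\|^{(d,\tilde d)}_{\max}\le\epsilon_{n1}$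 with probability at least $1-\delta_{n1}$. (B2) $\|\mathbf R\|^{(d,\tilde d)}_{\max}\le\epsilon_2$ for some $\epsilon_2>0$. (B3) there is $\delta_{n2}>0$ with $\|\widehat{\mathbf g}(\boldsymbol\theta_0)\|^{(d,\tilde d)}_{\max}\le\gamma_n$ with probability at least $1-\delta_{n2}$. (B4) there are a universal constant $c_5>0$ and $\mu>0$ with $\sigma_{\max}(m,\mathbf G)\ge c_5$ and $\sigma_{\min}(m,\mathbf G)/\sigma_{\max}(m,\mathbf G)\ge\mu$ for $m=16s/\mu^2$. The symbol $\lesssim$ hides constants independent of $(n,p,d,s,K,\mu)$. *)

theory Defs
  imports "HOL-Probability.Probability"
begin

text \<open>Matrices are functions nat => nat => real; only the entries inside the stated
  index ranges are ever used. Blocks are indexed from 0.\<close>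

definition block_fro :: "nat \<Rightarrow> nat \<Rightarrow> (nat \<Rightarrow> nat \<Rightarrow> real) \<Rightarrow> nat \<Rightarrow> nat \<Rightarrow> real" where
  "block_fro m1 m2 B i j = sqrt (\<Sum>a<m1. \<Sum>b<m2. (B (i * m1 + a) (j * m2 + b))\<^sup>2)"

definition bmax :: "nat \<Rightarrow> nat \<Rightarrow> nat \<Rightarrow> nat \<Rightarrow> (nat \<Rightarrow> nat \<Rightarrow> real) \<Rightarrow> real" where
  "bmax m1 m2 N1 N2 B = Max {block_fro m1 m2 B i j | i j. i < N1 \<and> j < N2}"

definition bnorm1 :: "nat \<Rightarrow> nat \<Rightarrow> nat \<Rightarrow> (nat \<Rightarrow> nat \<Rightarrow> real) \<Rightarrow> real" where
  "bnorm1 m1 m2 N1 B = (\<Sum>i<N1. block_fro m1 m2 B i 0)"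

text \<open>Affine map g(theta) = G theta + g(0), with inner dimension n.\<close>
definition gfun :: "(nat \<Rightarrow> nat \<Rightarrow> real) \<Rightarrow> (nat \<Rightarrow> nat \<Rightarrow> real) \<Rightarrow> nat \<Rightarrow> (nat \<Rightarrow> nat \<Rightarrow> real) \<Rightarrow> nat \<Rightarrow> nat \<Rightarrow> real" where
  "gfun G g0 n \<theta> = (\<lambda>i k. (\<Sum>j<n. G i j * \<theta> j k) + g0 i k)"

definition mdiff :: "(nat \<Rightarrow> nat \<Rightarrow> real) \<Rightarrow> (nat \<Rightarrow> nat \<Rightarrow> real) \<Rightarrow> nat \<Rightarrow> nat \<Rightarrow> real" where
  "mdiff A B = (\<lambda>i k. A i k - B i k)"

definition blk_idx :: "nat \<Rightarrow> nat set \<Rightarrow> nat set" where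
  "blk_idx d J = (\<lambda>(j, a). j * d + a) ` (J \<times> {..<d})"

text \<open>Smallest / largest singular value of the block submatrix G_{J,M}, as
  inf / sup of ||G_{J,M} x|| over unit vectors x.\<close>
definition smin_sub :: "nat \<Rightarrow> (nat \<Rightarrow> nat \<Rightarrow> real) \<Rightarrow> nat set \<Rightarrow> nat set \<Rightarrow> real" where
  "smin_sub d G J M = Inf {sqrt (\<Sum>r\<in>blk_idx d J. (\<Sum>c\<in>blk_idx d M. G r c * x c)\<^sup>2) | x.
       (\<Sum>c\<in>blk_idx d M. (x c)\<^sup>2) = 1}"

definition smax_sub :: "nat \<Rightarrow> (nat \<Rightarrow> nat \<Rightarrow> real) \<Rightarrow> nat set \<Rightarrow> nat set \<Rightarrow> real" where
  "smax_sub d G J M = Sup {sqrt (\<Sum>r\<in>blk_idx d J. (\<Sum>c\<in>blk_idx d M. G r c * x c)\<^sup>2) | x.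
       (\<Sum>c\<in>blk_idx d M. (x c)\<^sup>2) = 1}"

text \<open>sigma_min(m, G) and sigma_max(m, G) for G with q x p blocks of size d x d;
  M ranges over nonempty sets of block columns, J over sets of block rows.\<close>
definition sigma_min_m :: "nat \<Rightarrow> nat \<Rightarrow> nat \<Rightarrow> real \<Rightarrow> (nat \<Rightarrow> nat \<Rightarrow> real) \<Rightarrow> real" where
  "sigma_min_m d p q m G =
     Min ((\<lambda>M. Max ((\<lambda>J. smin_sub d G J M) ` {J. J \<subseteq> {..<q} \<and> real (card J) \<le> m}))
          ` {M. M \<subseteq> {..<p} \<and> M \<noteq> {} \<and> real (card M) \<le> m})"

definition sigma_max_m :: "nat \<Rightarrow> nat \<Rightarrow> nat \<Rightarrow> real \<Rightarrow> (nat \<Rightarrow> nat \<Rightarrow> real) \<Rightarrow> real" where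
  "sigma_max_m d p q m G =
     Max ((\<lambda>M. Max ((\<lambda>J. smax_sub d G J M) ` {J. J \<subseteq> {..<q} \<and> real (card J) \<le> m}))
          ` {M. M \<subseteq> {..<p} \<and> M \<noteq> {} \<and> real (card M) \<le> m})"

definition is_block_rmd :: "nat \<Rightarrow> nat \<Rightarrow> nat \<Rightarrow> nat \<Rightarrow> (nat \<Rightarrow> nat \<Rightarrow> real) \<Rightarrow> (nat \<Rightarrow> nat \<Rightarrow> real)
     \<Rightarrow> real \<Rightarrow> (nat \<Rightarrow> nat \<Rightarrow> real) \<Rightarrow> bool" where
  "is_block_rmd p q d dt Gh gh0 \<gamma> \<theta> \<longleftrightarrow>
     bmax d dt q 1 (gfun Gh gh0 (p * d) \<theta>) \<le> \<gamma> \<and>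
     (\<forall>\<theta>'. bmax d dt q 1 (gfun Gh gh0 (p * d) \<theta>') \<le> \<gamma> \<longrightarrow> bnorm1 d dt p \<theta> \<le> bnorm1 d dt p \<theta>')"

end

theory Submission
  imports Defs
begin

text \<open>
  Let \<open>\<theta>'\<close> be the estimator, \<open>\<Delta> = \<theta>' - \<theta>\<^sub>0\<close> its error and \<open>S\<close> the block support of \<open>\<theta>\<^sub>0\<close>.
  On the event of (B3) the parameter \<open>\<theta>\<^sub>0\<close> is feasible, so minimality of \<open>\<theta>'\<close> gives the cone
  condition: the block \<open>\<ell>\<^sub>1\<close> mass of \<open>\<Delta>\<close> off \<open>S\<close> is at most its mass on \<open>S\<close>. On the event of (B1)
  every block row of \<open>G \<Delta> = g'(\<theta>') - (G' - G) \<theta>' - (g'(0) - g(0)) + R\<close>, where \<open>G'\<close> and \<open>g'\<close> are the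
  empirical versions, has norm at most \<open>\<gamma> + (K + 1) \<epsilon>\<^sub>1 + \<epsilon>\<^sub>2\<close>. Sorting the off-support blocks by
  decreasing norm and cutting them into chunks of about \<open>4 s / \<mu>\<^sup>2\<close> blocks (the shelling argument
  of Candes and Tao), the \<open>\<ell>\<^sub>2\<close> norms of all chunks but the first add up to at most \<open>\<mu> / 2\<close> times
  the \<open>\<ell>\<^sub>2\<close> norm of \<open>\<Delta>\<close> on the head \<open>T = S \<union> (first chunk)\<close>. The restricted singular values of
  (B4) then turn the residual bound into a bound on \<open>\<Delta>\<close> on \<open>T\<close>, and the \<open>\<ell>\<^sub>1\<close> error is at most
  \<open>2 sqrt s\<close> times that. The two events hold together with probability at least \<open>1 - \<delta>\<^sub>1 - \<delta>\<^sub>2\<close>.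
\<close>

section \<open>Euclidean norms of finite families\<close>

lemma L2_set_sum_le: "L2_set (\<lambda>x. \<Sum>i\<in>I. f i x) A \<le> (\<Sum>i\<in>I. L2_set (f i) A)"
proof (induction I rule: infinite_finite_induct)
  case (insert a I)
  have "L2_set (\<lambda>x. f a x + (\<Sum>i\<in>I. f i x)) A \<le> L2_set (f a) A + L2_set (\<lambda>x. \<Sum>i\<in>I. f i x) A"
    by (rule L2_set_triangle_ineq)
  with insert show ?case by simp
qed (simp_all add: L2_set_def)

lemma L2_set_diff_le: "L2_set (\<lambda>x. f x - g x) A \<le> L2_set f A + L2_set g A"
  using L2_set_triangle_ineq[of f "\<lambda>x. - g x" A] by (simp add: L2_set_def)

lemma L2_set_mono2: "finite B \<Longrightarrow> A \<subseteq> B \<Longrightarrow> L2_set f A \<le> L2_set f B"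
  unfolding L2_set_def by (intro real_sqrt_le_mono sum_mono2) auto

lemma sum_le_sqrt_card_mult_L2_set: "sum f A \<le> sqrt (card A) * L2_set f A"
proof -
  have "sum f A \<le> (\<Sum>i\<in>A. \<bar>f i\<bar> * \<bar>1\<bar>)" by (simp add: sum_mono)
  also have "\<dots> \<le> L2_set f A * L2_set (\<lambda>_. 1) A" by (rule L2_set_mult_ineq)
  finally show ?thesis by (simp add: L2_set_constant mult.commute)
qed

lemma L2_set_Times:
  "L2_set (\<lambda>(a, b). f a b) (A \<times> B) = L2_set (\<lambda>b. L2_set (\<lambda>a. f a b) A) B"
proof -
  have "(\<Sum>x\<in>A \<times> B. (case x of (a, b) \<Rightarrow> f a b)\<^sup>2) = (\<Sum>a\<in>A. \<Sum>b\<in>B. (f a b)\<^sup>2)"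
    by (simp add: sum.cartesian_product split_def)
  also have "\<dots> = (\<Sum>b\<in>B. \<Sum>a\<in>A. (f a b)\<^sup>2)"
    by (rule sum.swap)
  finally show ?thesis
    by (simp add: L2_set_def sum_nonneg)
qed

lemma L2_set_matrix_mult_le:
  fixes X Y :: "nat \<Rightarrow> nat \<Rightarrow> real"
  shows "L2_set (\<lambda>(a, b). \<Sum>e\<in>E. X a e * Y e b) (A \<times> B)
     \<le> L2_set (\<lambda>(a, e). X a e) (A \<times> E) * L2_set (\<lambda>(e, b). Y e b) (E \<times> B)"
proof -
  have sq: "(L2_set (\<lambda>(a, b). F a b) (S \<times> T))\<^sup>2 = (\<Sum>a\<in>S. \<Sum>b\<in>T. (F a b)\<^sup>2)"
    for F :: "nat \<Rightarrow> nat \<Rightarrow> real" and S T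
    unfolding L2_set_def by (simp add: sum_nonneg sum.cartesian_product split_def)
  have "(\<Sum>a\<in>A. \<Sum>b\<in>B. (\<Sum>e\<in>E. X a e * Y e b)\<^sup>2)
      \<le> (\<Sum>a\<in>A. \<Sum>b\<in>B. (\<Sum>e\<in>E. (X a e)\<^sup>2) * (\<Sum>e\<in>E. (Y e b)\<^sup>2))"
    by (intro sum_mono Cauchy_Schwarz_ineq_sum)
  also have "\<dots> = (\<Sum>a\<in>A. \<Sum>e\<in>E. (X a e)\<^sup>2) * (\<Sum>e\<in>E. \<Sum>b\<in>B. (Y e b)\<^sup>2)"
    by (simp add: sum_product[symmetric] sum.swap[of _ B])
  finally have "(L2_set (\<lambda>(a, b). \<Sum>e\<in>E. X a e * Y e b) (A \<times> B))\<^sup>2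
      \<le> (L2_set (\<lambda>(a, e). X a e) (A \<times> E) * L2_set (\<lambda>(e, b). Y e b) (E \<times> B))\<^sup>2"
    by (simp only: sq power_mult_distrib)
  then show ?thesis
    by (rule power2_le_imp_le) simp
qed

section \<open>Block indices and block norms\<close>

lemma inj_on_blk_idx: "inj_on (\<lambda>(j, a). j * d + a) (M \<times> {..<d::nat})"
proof (rule inj_onI, clarsimp)
  fix j a j' a' assume "j * d + a = j' * d + a'" "a < d" "a' < d"
  then have "(j * d + a) div d = (j' * d + a') div d" "(j * d + a) mod d = (j' * d + a') mod d"
    by simp_all
  with \<open>a < d\<close> \<open>a' < d\<close> show "j = j' \<and> a = a'"
    by simp
qed

lemma finite_blk_idx [simp]: "finite M \<Longrightarrow> finite (blk_idx d M)"
  unfolding blk_idx_def by simp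

lemma blk_idx_empty [simp]: "blk_idx d {} = {}"
  unfolding blk_idx_def by simp

lemma sum_blk_idx: "(\<Sum>c\<in>blk_idx d M. h c) = (\<Sum>j\<in>M. \<Sum>e<d. h (j * d + e))"
proof -
  have "(\<Sum>c\<in>blk_idx d M. h c) = (\<Sum>x\<in>M \<times> {..<d}. h ((\<lambda>(j, a). j * d + a) x))"
    unfolding blk_idx_def by (rule sum.reindex[OF inj_on_blk_idx, unfolded comp_def])
  then show ?thesis
    by (simp add: sum.cartesian_product split_def)
qed

lemma blk_idx_lessThan: "blk_idx d {..<p} = {..<p * d}"
proof (cases "d = 0")
  case False
  have "j * d + e < p * d" if "j < p" "e < d" for j e
  proof -
    have "j * d + e < (j + 1) * d" using that by simp
    also have "\<dots> \<le> p * d" using that by (intro mult_right_mono) auto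
    finally show ?thesis .
  qed
  moreover have "c \<in> blk_idx d {..<p}" if "c < p * d" for c
    unfolding blk_idx_def using that False
    by (auto simp: div_less_iff_less_mult intro!: image_eqI[where x = "(c div d, c mod d)"])
  ultimately show ?thesis
    unfolding blk_idx_def by auto
qed (simp add: blk_idx_def)

lemma sum_lessThan_mult_blocks: "(\<Sum>c<p * d. h c) = (\<Sum>j<p. \<Sum>e<d. h (j * d + e))"
  for p d :: nat
  using sum_blk_idx[where M = "{..<p}" and h = h] by (simp add: blk_idx_lessThan)

lemma sum_lessThan_mult_blocks_partition:
  fixes N :: nat
  assumes part: "{..<p} = T \<union> (\<Union>i<N. Ch i)" "T \<inter> (\<Union>i<N. Ch i) = {}" "disjoint_family_on Ch {..<N}"
  shows "(\<Sum>c<p * d. h c) = (\<Sum>c\<in>blk_idx d T. h c) + (\<Sum>i<N. \<Sum>c\<in>blk_idx d (Ch i). h c)"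
proof -
  define w where "w j = (\<Sum>e<d. h (j * d + e))" for j
  have "T \<subseteq> {..<p}" "\<And>i. i < N \<Longrightarrow> Ch i \<subseteq> {..<p}"
    using part(1) by auto
  then have fin: "finite T" "\<And>i. i < N \<Longrightarrow> finite (Ch i)"
    by (auto intro: finite_subset)
  have "(\<Sum>c<p * d. h c) = sum w T + sum w (\<Union>i<N. Ch i)"
    unfolding sum_lessThan_mult_blocks w_def[symmetric] part(1)
    using fin part(2) by (intro sum.union_disjoint finite_UN_I) auto
  also have "sum w (\<Union>i<N. Ch i) = (\<Sum>i<N. sum w (Ch i))"
    using fin part(3) by (intro sum.UNION_disjoint) (auto simp: disjoint_family_on_def)
  finally show ?thesis
    by (simp add: w_def sum_blk_idx)
qed

lemma block_fro_eq_L2_set: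
  "block_fro m1 m2 B i j = L2_set (\<lambda>(a, b). B (i * m1 + a) (j * m2 + b)) ({..<m1} \<times> {..<m2})"
  unfolding block_fro_def L2_set_def by (simp add: sum.cartesian_product split_def)

lemma block_fro_nonneg [simp]: "0 \<le> block_fro m1 m2 B i j"
  by (simp add: block_fro_eq_L2_set)

lemma block_fro_cong:
  assumes "\<And>a b. a < m1 \<Longrightarrow> b < m2 \<Longrightarrow> A (i * m1 + a) (j * m2 + b) = B (i * m1 + a) (j * m2 + b)"
  shows "block_fro m1 m2 A i j = block_fro m1 m2 B i j"
  unfolding block_fro_def using assms by (intro arg_cong[where f = sqrt] sum.cong) auto

lemma block_fro_add_le:
  "block_fro m1 m2 (\<lambda>r c. A r c + B r c) i j \<le> block_fro m1 m2 A i j + block_fro m1 m2 B i j"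
  unfolding block_fro_eq_L2_set
  using L2_set_triangle_ineq[of "\<lambda>(a, b). A (i * m1 + a) (j * m2 + b)" "\<lambda>(a, b). B (i * m1 + a) (j * m2 + b)"]
  by (simp add: split_def)

lemma block_fro_uminus [simp]: "block_fro m1 m2 (\<lambda>r c. - A r c) i j = block_fro m1 m2 A i j"
  unfolding block_fro_def by simp

lemma block_fro_diff_le:
  "block_fro m1 m2 (\<lambda>r c. A r c - B r c) i j \<le> block_fro m1 m2 A i j + block_fro m1 m2 B i j"
  using block_fro_add_le[of m1 m2 A "\<lambda>r c. - B r c" i j] by simp

lemma block_fro_le_mdiff_add: "block_fro m1 m2 A i j \<le> block_fro m1 m2 (mdiff A B) i j + block_fro m1 m2 B i j"
  using block_fro_add_le[of m1 m2 "mdiff A B" B i j] by (simp add: mdiff_def)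

lemma block_fro_mdiff_commute: "block_fro m1 m2 (mdiff A B) i j = block_fro m1 m2 (mdiff B A) i j"
  using block_fro_uminus[of m1 m2 "mdiff B A" i j] by (simp add: mdiff_def)

lemma block_fro_le_bmax:
  assumes "i < N1" "j < N2"
  shows "block_fro m1 m2 B i j \<le> bmax m1 m2 N1 N2 B"
proof -
  have "finite {block_fro m1 m2 B i j | i j. i < N1 \<and> j < N2}"
    using finite_image_set2[of "\<lambda>i. i < N1" "\<lambda>j. j < N2" "block_fro m1 m2 B"] by simp
  then show ?thesis
    unfolding bmax_def using assms by (intro Max_ge) auto
qed

lemma L2_set_blk_idx_Times:
  "L2_set (\<lambda>(c, k). X c k) (blk_idx d M \<times> {..<dt}) = L2_set (\<lambda>j. block_fro d dt X j 0) M"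
proof -
  have "(\<Sum>x\<in>blk_idx d M \<times> {..<dt}. (case x of (c, k) \<Rightarrow> X c k)\<^sup>2)
      = (\<Sum>c\<in>blk_idx d M. \<Sum>k<dt. (X c k)\<^sup>2)"
    by (simp add: sum.cartesian_product split_def)
  also have "\<dots> = (\<Sum>j\<in>M. \<Sum>e<d. \<Sum>k<dt. (X (j * d + e) k)\<^sup>2)"
    by (rule sum_blk_idx)
  also have "\<dots> = (\<Sum>j\<in>M. (block_fro d dt X j 0)\<^sup>2)"
    unfolding block_fro_def by (simp add: sum_nonneg)
  finally show ?thesis
    unfolding L2_set_def by simp
qed

lemma block_fro_mult_le:
  "block_fro d dt (\<lambda>r k. \<Sum>c<p * d. A r c * T c k) i 0
     \<le> (\<Sum>j<p. block_fro d d A i j * block_fro d dt T j 0)"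
proof -
  have "block_fro d dt (\<lambda>r k. \<Sum>c<p * d. A r c * T c k) i 0
     = L2_set (\<lambda>x. \<Sum>j<p. (\<lambda>(a, b). \<Sum>e<d. A (i * d + a) (j * d + e) * T (j * d + e) b) x)
         ({..<d} \<times> {..<dt})"
    unfolding block_fro_eq_L2_set by (simp add: sum_lessThan_mult_blocks split_def)
  also have "\<dots> \<le> (\<Sum>j<p. L2_set (\<lambda>(a, b). \<Sum>e<d. A (i * d + a) (j * d + e) * T (j * d + e) b)
         ({..<d} \<times> {..<dt}))"
    by (rule L2_set_sum_le)
  also have "\<dots> \<le> (\<Sum>j<p. block_fro d d A i j * block_fro d dt T j 0)"
    unfolding block_fro_eq_L2_set
    using L2_set_matrix_mult_le[of "\<lambda>a e. A (i * d + a) (_ * d + e)" "\<lambda>e b. T (_ * d + e) b"]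
    by (intro sum_mono) simp
  finally show ?thesis .
qed

lemma block_fro_mult_le_bmax_mult_bnorm1:
  assumes "i < q"
  shows "block_fro d dt (\<lambda>r k. \<Sum>c<p * d. A r c * T c k) i 0 \<le> bmax d d q p A * bnorm1 d dt p T"
proof -
  have "block_fro d dt (\<lambda>r k. \<Sum>c<p * d. A r c * T c k) i 0
      \<le> (\<Sum>j<p. block_fro d d A i j * block_fro d dt T j 0)"
    by (rule block_fro_mult_le)
  also have "\<dots> \<le> (\<Sum>j<p. bmax d d q p A * block_fro d dt T j 0)"
    using assms by (intro sum_mono mult_right_mono block_fro_le_bmax) auto
  finally show ?thesis
    by (simp add: bnorm1_def sum_distrib_left)
qed

section \<open>Restricted singular values\<close>

definition sub_gains :: "nat \<Rightarrow> (nat \<Rightarrow> nat \<Rightarrow> real) \<Rightarrow> nat set \<Rightarrow> nat set \<Rightarrow> real set" where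
  "sub_gains d G J M = {L2_set (\<lambda>r. \<Sum>c\<in>blk_idx d M. G r c * x c) (blk_idx d J) | x.
       (\<Sum>c\<in>blk_idx d M. (x c)\<^sup>2) = 1}"

lemma smin_sub_eq_Inf: "smin_sub d G J M = Inf (sub_gains d G J M)"
  unfolding smin_sub_def sub_gains_def L2_set_def ..

lemma smax_sub_eq_Sup: "smax_sub d G J M = Sup (sub_gains d G J M)"
  unfolding smax_sub_def sub_gains_def L2_set_def ..

lemma bdd_below_sub_gains: "bdd_below (sub_gains d G J M)"
  unfolding sub_gains_def by (rule bdd_belowI[of _ 0]) auto

lemma bdd_above_sub_gains: "bdd_above (sub_gains d G J M)"
proof -
  have "L2_set (\<lambda>r. \<Sum>c\<in>blk_idx d M. G r c * x c) (blk_idx d J)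
      \<le> sqrt (\<Sum>r\<in>blk_idx d J. \<Sum>c\<in>blk_idx d M. (G r c)\<^sup>2)"
    if "(\<Sum>c\<in>blk_idx d M. (x c)\<^sup>2) = 1" for x
    unfolding L2_set_def
    using Cauchy_Schwarz_ineq_sum[of "G _" x "blk_idx d M"] that
    by (intro real_sqrt_le_mono sum_mono) simp
  then show ?thesis
    unfolding sub_gains_def by (intro bdd_aboveI) auto
qed

lemma rescaled_in_sub_gains:
  assumes "L2_set x (blk_idx d M) \<noteq> 0"
  shows "L2_set (\<lambda>r. \<Sum>c\<in>blk_idx d M. G r c * x c) (blk_idx d J) / L2_set x (blk_idx d M)
    \<in> sub_gains d G J M"
proof -
  define n where "n = L2_set x (blk_idx d M)"
  have n: "n > 0" "n\<^sup>2 = (\<Sum>c\<in>blk_idx d M. (x c)\<^sup>2)"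
    using assms by (simp_all add: n_def L2_set_def sum_nonneg order.not_eq_order_implies_strict)
  have "(\<Sum>c\<in>blk_idx d M. (x c / n)\<^sup>2) = 1"
    using n by (simp add: power_divide n(2)[symmetric] flip: sum_divide_distrib)
  moreover have "L2_set (\<lambda>r. \<Sum>c\<in>blk_idx d M. G r c * (x c / n)) (blk_idx d J)
      = L2_set (\<lambda>r. \<Sum>c\<in>blk_idx d M. G r c * x c) (blk_idx d J) / n"
    using n L2_set_right_distrib[of "1 / n" "\<lambda>r. \<Sum>c\<in>blk_idx d M. G r c * x c" "blk_idx d J"]
    by (simp add: sum_divide_distrib)
  ultimately show ?thesis
    unfolding sub_gains_def n_def[symmetric] by (intro CollectI exI[of _ "\<lambda>c. x c / n"]) simp
qed

lemma smin_sub_mult_le: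
  "smin_sub d G J M * L2_set x (blk_idx d M) \<le> L2_set (\<lambda>r. \<Sum>c\<in>blk_idx d M. G r c * x c) (blk_idx d J)"
proof (cases "L2_set x (blk_idx d M) = 0")
  case False
  then have "smin_sub d G J M
      \<le> L2_set (\<lambda>r. \<Sum>c\<in>blk_idx d M. G r c * x c) (blk_idx d J) / L2_set x (blk_idx d M)"
    unfolding smin_sub_eq_Inf by (intro cInf_lower rescaled_in_sub_gains bdd_below_sub_gains)
  with False show ?thesis
    by (simp add: le_divide_eq order.not_eq_order_implies_strict)
qed simp

lemma le_smax_sub_mult:
  assumes "finite M"
  shows "L2_set (\<lambda>r. \<Sum>c\<in>blk_idx d M. G r c * x c) (blk_idx d J) \<le> smax_sub d G J M * L2_set x (blk_idx d M)"
proof (cases "L2_set x (blk_idx d M) = 0")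
  case True
  with assms have "\<forall>c\<in>blk_idx d M. x c = 0"
    by (simp add: L2_set_eq_0_iff)
  with True show ?thesis
    by (simp add: L2_set_constant)
next
  case False
  then have "L2_set (\<lambda>r. \<Sum>c\<in>blk_idx d M. G r c * x c) (blk_idx d J) / L2_set x (blk_idx d M)
      \<le> smax_sub d G J M"
    unfolding smax_sub_eq_Sup by (intro cSup_upper rescaled_in_sub_gains bdd_above_sub_gains)
  with False show ?thesis
    by (simp add: divide_le_eq mult.commute order.not_eq_order_implies_strict)
qed

lemma smin_sub_le_smax_sub:
  assumes "finite M" "M \<noteq> {}" "d \<ge> 1"
  shows "smin_sub d G J M \<le> smax_sub d G J M"
proof -
  obtain j where "j \<in> M" using assms(2) by blast
  then have j: "j * d \<in> blk_idx d M"
    unfolding blk_idx_def using assms(3) by (intro image_eqI[where x = "(j, 0)"]) auto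
  define x :: "nat \<Rightarrow> real" where "x c = (if c = j * d then 1 else 0)" for c
  have "L2_set x (blk_idx d M) = 1"
    using assms(1) j by (simp add: L2_set_def x_def if_distrib[of power2] sum.If_cases Int_absorb1)
  then show ?thesis
    using smin_sub_mult_le[where d = d and G = G and J = J and M = M and x = x]
      le_smax_sub_mult[OF assms(1), where d = d and G = G and J = J and x = x]
    by simp
qed

lemma smin_sub_mult_L2_set_le:
  assumes "0 \<le> smin_sub d G J M"
  shows "smin_sub d G J M * L2_set (\<lambda>(c, k). X c k) (blk_idx d M \<times> K)
     \<le> L2_set (\<lambda>(r, k). \<Sum>c\<in>blk_idx d M. G r c * X c k) (blk_idx d J \<times> K)"
proof -
  have "smin_sub d G J M * L2_set (\<lambda>(c, k). X c k) (blk_idx d M \<times> K)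
      = L2_set (\<lambda>k. smin_sub d G J M * L2_set (\<lambda>c. X c k) (blk_idx d M)) K"
    unfolding L2_set_Times by (rule L2_set_right_distrib[OF assms])
  also have "\<dots> \<le> L2_set (\<lambda>k. L2_set (\<lambda>r. \<Sum>c\<in>blk_idx d M. G r c * X c k) (blk_idx d J)) K"
    using assms by (intro L2_set_mono smin_sub_mult_le) simp
  finally show ?thesis
    by (simp add: L2_set_Times)
qed

lemma L2_set_le_smax_sub_mult:
  assumes "finite M" "smax_sub d G J M \<le> \<sigma>" "0 \<le> \<sigma>"
  shows "L2_set (\<lambda>(r, k). \<Sum>c\<in>blk_idx d M. G r c * X c k) (blk_idx d J \<times> K)
     \<le> \<sigma> * L2_set (\<lambda>(c, k). X c k) (blk_idx d M \<times> K)"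
proof -
  have "L2_set (\<lambda>r. \<Sum>c\<in>blk_idx d M. G r c * X c k) (blk_idx d J)
      \<le> \<sigma> * L2_set (\<lambda>c. X c k) (blk_idx d M)" for k
    using le_smax_sub_mult[OF assms(1)] assms(2) by (meson L2_set_nonneg mult_right_mono order_trans)
  then have "L2_set (\<lambda>(r, k). \<Sum>c\<in>blk_idx d M. G r c * X c k) (blk_idx d J \<times> K)
      \<le> L2_set (\<lambda>k. \<sigma> * L2_set (\<lambda>c. X c k) (blk_idx d M)) K"
    unfolding L2_set_Times by (intro L2_set_mono) simp_all
  also have "\<dots> = \<sigma> * L2_set (\<lambda>(c, k). X c k) (blk_idx d M \<times> K)"
    unfolding L2_set_Times by (rule L2_set_right_distrib[OF assms(3), symmetric])
  finally show ?thesis .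
qed

lemma sigma_min_m_le_smin_sub:
  assumes "M \<subseteq> {..<p}" "M \<noteq> {}" "real (card M) \<le> m" "0 \<le> m"
  obtains J where "J \<subseteq> {..<q}" "real (card J) \<le> m" "sigma_min_m d p q m G \<le> smin_sub d G J M"
proof -
  let ?Ms = "{M. M \<subseteq> {..<p} \<and> M \<noteq> {} \<and> real (card M) \<le> m}"
  let ?Js = "{J. J \<subseteq> {..<q} \<and> real (card J) \<le> m}"
  have fin: "finite ?Ms" "finite ?Js"
    by (auto intro: finite_subset[of _ "Pow {..<p}"] finite_subset[of _ "Pow {..<q}"])
  have "{} \<in> ?Js"
    using assms(4) by simp
  then have "Max ((\<lambda>J. smin_sub d G J M) ` ?Js) \<in> (\<lambda>J. smin_sub d G J M) ` ?Js"
    using fin by (intro Max_in) auto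
  then obtain J where "J \<in> ?Js" "Max ((\<lambda>J. smin_sub d G J M) ` ?Js) = smin_sub d G J M"
    by blast
  moreover have "sigma_min_m d p q m G \<le> Max ((\<lambda>J. smin_sub d G J M) ` ?Js)"
    unfolding sigma_min_m_def using fin assms by (intro Min_le) auto
  ultimately show ?thesis
    using that by auto
qed

lemma smax_sub_le_sigma_max_m:
  assumes "M \<subseteq> {..<p}" "M \<noteq> {}" "real (card M) \<le> m" "J \<subseteq> {..<q}" "real (card J) \<le> m"
  shows "smax_sub d G J M \<le> sigma_max_m d p q m G"
proof -
  let ?Ms = "{M. M \<subseteq> {..<p} \<and> M \<noteq> {} \<and> real (card M) \<le> m}"
  let ?Js = "{J. J \<subseteq> {..<q} \<and> real (card J) \<le> m}"
  have fin: "finite ?Ms" "finite ?Js"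
    by (auto intro: finite_subset[of _ "Pow {..<p}"] finite_subset[of _ "Pow {..<q}"])
  have "smax_sub d G J M \<le> Max ((\<lambda>J. smax_sub d G J M) ` ?Js)"
    using fin assms by (intro Max_ge) auto
  also have "\<dots> \<le> sigma_max_m d p q m G"
    unfolding sigma_max_m_def using fin assms by (intro Max_ge) auto
  finally show ?thesis .
qed

lemma sigma_min_m_le_sigma_max_m:
  assumes "1 \<le> d" "1 \<le> p"
  shows "sigma_min_m d p q m G \<le> sigma_max_m d p q m G"
proof (cases "1 \<le> m")
  case True
  have M: "{0} \<subseteq> {..<p}" "{0} \<noteq> {}" "real (card {0::nat}) \<le> m"
    using assms True by auto
  have "0 \<le> m"
    using True by simp
  then obtain J where J: "J \<subseteq> {..<q}" "real (card J) \<le> m" "sigma_min_m d p q m G \<le> smin_sub d G J {0}"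
    by (rule sigma_min_m_le_smin_sub[OF M])
  moreover have "smin_sub d G J {0} \<le> smax_sub d G J {0}"
    using assms(1) by (intro smin_sub_le_smax_sub) auto
  moreover have "smax_sub d G J {0} \<le> sigma_max_m d p q m G"
    using M J by (intro smax_sub_le_sigma_max_m) auto
  ultimately show ?thesis
    by linarith
next
  case False
  have card_gt: "m < real (card M)" if "M \<subseteq> {..<p}" "M \<noteq> {}" for M :: "nat set"
  proof -
    have "1 \<le> card M"
      using that finite_subset[OF that(1)] by (simp add: Suc_le_eq card_gt_0_iff)
    with False show ?thesis
      by linarith
  qed
  have no_cols: "{M. M \<subseteq> {..<p} \<and> M \<noteq> {} \<and> real (card M) \<le> m} = {}"
    using card_gt by (auto simp: not_less[symmetric])
  \<comment> \<open>No column set is admissible, so both sides are the same unspecified value \<open>Min {} = Max {}\<close>.\<close>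
  have "Min {} = (Max {} :: real)"
    by (simp add: Min.eq_fold' Max.eq_fold')
  then show ?thesis
    unfolding sigma_min_m_def sigma_max_m_def no_cols image_empty by simp
qed

lemma le_one_of_le_sigma_ratio:
  assumes "1 \<le> d" "1 \<le> p" "0 < sigma_max_m d p q m G"
    and "\<mu> \<le> sigma_min_m d p q m G / sigma_max_m d p q m G"
  shows "\<mu> \<le> 1"
  using sigma_min_m_le_sigma_max_m[OF assms(1,2), of q m G] assms(3,4)
  by (meson divide_le_eq_1_pos order_trans)

lemma L2_set_mult_head_le:
  fixes G \<Delta> :: "nat \<Rightarrow> nat \<Rightarrow> real" and N :: nat
  assumes part: "{..<p} = T \<union> (\<Union>i<N. Ch i)" "T \<inter> (\<Union>i<N. Ch i) = {}" "disjoint_family_on Ch {..<N}"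
  shows "L2_set (\<lambda>(r, k). \<Sum>c\<in>blk_idx d T. G r c * \<Delta> c k) A
    \<le> L2_set (\<lambda>(r, k). \<Sum>c<p * d. G r c * \<Delta> c k) A
      + (\<Sum>i<N. L2_set (\<lambda>(r, k). \<Sum>c\<in>blk_idx d (Ch i). G r c * \<Delta> c k) A)"
proof -
  define Y where "Y M = (\<lambda>(r, k). \<Sum>c\<in>blk_idx d M. G r c * \<Delta> c k)" for M
  define D where "D = (\<lambda>(r, k). \<Sum>c<p * d. G r c * \<Delta> c k)"
  have "Y T = (\<lambda>x. D x - (\<Sum>i<N. Y (Ch i) x))"
  proof
    fix x
    show "Y T x = D x - (\<Sum>i<N. Y (Ch i) x)"
      using sum_lessThan_mult_blocks_partition[OF part, where d = d and h = "\<lambda>c. G (fst x) c * \<Delta> c (snd x)"]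
      by (simp add: Y_def D_def split_def)
  qed
  then have "L2_set (Y T) A = L2_set (\<lambda>x. D x - (\<Sum>i<N. Y (Ch i) x)) A"
    by simp
  also have "\<dots> \<le> L2_set D A + L2_set (\<lambda>x. \<Sum>i<N. Y (Ch i) x) A"
    by (rule L2_set_diff_le)
  also have "\<dots> \<le> L2_set D A + (\<Sum>i<N. L2_set (Y (Ch i)) A)"
    by (intro add_left_mono L2_set_sum_le)
  finally show ?thesis
    by (simp add: Y_def D_def)
qed

text \<open>The head \<open>G\<^bsub>J,T\<^esub> \<Delta>\<^sub>T\<close> is bounded below by the smallest restricted singular value, and above,
  being the residual \<open>(G \<Delta>)\<^sub>J\<close> minus the tail terms \<open>G\<^bsub>J,Ch i\<^esub> \<Delta>\<^bsub>Ch i\<^esub>\<close>, by the residual bound and the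
  largest restricted singular values.\<close>
lemma L2_set_head_le:
  fixes \<Delta> G :: "nat \<Rightarrow> nat \<Rightarrow> real" and N :: nat
  assumes part: "{..<p} = T \<union> (\<Union>i<N. Ch i)" "T \<inter> (\<Union>i<N. Ch i) = {}" "disjoint_family_on Ch {..<N}"
    and "0 \<le> a" "a \<le> smin_sub d G J T"
    and smax: "\<And>i. i < N \<Longrightarrow> Ch i \<noteq> {} \<Longrightarrow> smax_sub d G J (Ch i) \<le> b" and "0 \<le> b"
    and residual: "\<And>r. r \<in> J \<Longrightarrow> block_fro d dt (\<lambda>r k. \<Sum>c<p * d. G r c * \<Delta> c k) r 0 \<le> \<rho>"
    and "0 \<le> \<rho>"
  shows "a * L2_set (\<lambda>j. block_fro d dt \<Delta> j 0) T
    \<le> sqrt (card J) * \<rho> + b * (\<Sum>i<N. L2_set (\<lambda>j. block_fro d dt \<Delta> j 0) (Ch i))"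
proof -
  define f where "f = (\<lambda>j. block_fro d dt \<Delta> j 0)"
  define Y where "Y M = L2_set (\<lambda>(r, k). \<Sum>c\<in>blk_idx d M. G r c * \<Delta> c k) (blk_idx d J \<times> {..<dt})" for M
  have tail: "Y (Ch i) \<le> b * L2_set f (Ch i)" if "i < N" for i
  proof (cases "Ch i = {}")
    case False
    have "finite (Ch i)"
      using part(1) that by (auto intro: finite_subset[of _ "{..<p}"])
    then show ?thesis
      using L2_set_le_smax_sub_mult[OF _ smax[OF that False] \<open>0 \<le> b\<close>, of "\<Delta>" "{..<dt}"]
      by (simp add: Y_def f_def L2_set_blk_idx_Times)
  qed (simp add: Y_def L2_set_constant split_def)
  have "a * L2_set f T \<le> smin_sub d G J T * L2_set f T"
    using assms(5) by (intro mult_right_mono) (auto simp: f_def)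
  also have "\<dots> \<le> Y T"
    using smin_sub_mult_L2_set_le[of d G J T \<Delta> "{..<dt}"] assms(4,5)
    by (simp add: Y_def f_def L2_set_blk_idx_Times)
  also have "\<dots> \<le> L2_set (\<lambda>(r, k). \<Sum>c<p * d. G r c * \<Delta> c k) (blk_idx d J \<times> {..<dt}) + (\<Sum>i<N. Y (Ch i))"
    unfolding Y_def by (rule L2_set_mult_head_le[OF part])
  also have "L2_set (\<lambda>(r, k). \<Sum>c<p * d. G r c * \<Delta> c k) (blk_idx d J \<times> {..<dt})
      = L2_set (\<lambda>i. block_fro d dt (\<lambda>r k. \<Sum>c<p * d. G r c * \<Delta> c k) i 0) J"
    by (rule L2_set_blk_idx_Times)
  also have "\<dots> \<le> sqrt (card J) * \<rho>"
    using L2_set_mono[of J _ "\<lambda>_. \<rho>"] residual \<open>0 \<le> \<rho>\<close> by (simp add: L2_set_constant)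
  also have "(\<Sum>i<N. Y (Ch i)) \<le> (\<Sum>i<N. b * L2_set f (Ch i))"
    using tail by (intro sum_mono) simp
  finally show ?thesis
    by (simp add: f_def sum_distrib_left)
qed

lemma L2_set_head_le_sigma_max_m:
  fixes \<Delta> G :: "nat \<Rightarrow> nat \<Rightarrow> real" and N :: nat
  assumes part: "{..<p} = T \<union> (\<Union>i<N. Ch i)" "T \<inter> (\<Union>i<N. Ch i) = {}" "disjoint_family_on Ch {..<N}"
    and "T \<noteq> {}" "real (card T) \<le> m" "\<forall>i. real (card (Ch i)) \<le> m" "0 \<le> m"
    and "0 \<le> a" "a \<le> sigma_min_m d p q m G" "0 \<le> sigma_max_m d p q m G"
    and residual: "\<And>i. i < q \<Longrightarrow> block_fro d dt (\<lambda>r k. \<Sum>c<p * d. G r c * \<Delta> c k) i 0 \<le> \<rho>"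
    and "0 \<le> \<rho>"
  shows "a * L2_set (\<lambda>j. block_fro d dt \<Delta> j 0) T
    \<le> sqrt m * \<rho> + sigma_max_m d p q m G * (\<Sum>i<N. L2_set (\<lambda>j. block_fro d dt \<Delta> j 0) (Ch i))"
proof -
  have "T \<subseteq> {..<p}"
    using part(1) by blast
  then obtain J where J: "J \<subseteq> {..<q}" "real (card J) \<le> m" "sigma_min_m d p q m G \<le> smin_sub d G J T"
    using sigma_min_m_le_smin_sub[of T p m q d G] assms(4,5,7) by blast
  have "smax_sub d G J (Ch i) \<le> sigma_max_m d p q m G" if "i < N" "Ch i \<noteq> {}" for i
  proof (rule smax_sub_le_sigma_max_m)
    show "Ch i \<subseteq> {..<p}"
      using part(1) that(1) by blast
  qed (use that(2) assms(6) J(1,2) in auto)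
  then have "a * L2_set (\<lambda>j. block_fro d dt \<Delta> j 0) T
      \<le> sqrt (card J) * \<rho> + sigma_max_m d p q m G * (\<Sum>i<N. L2_set (\<lambda>j. block_fro d dt \<Delta> j 0) (Ch i))"
    using assms(8-10,12) J(1,3) residual by (intro L2_set_head_le[OF part]) auto
  also have "sqrt (card J) * \<rho> \<le> sqrt m * \<rho>"
    using J(2) \<open>0 \<le> \<rho>\<close> by (intro mult_right_mono) auto
  finally show ?thesis
    by simp
qed

section \<open>Splitting a cone vector into head and tail\<close>

lemma L2_set_le_sum_div_sqrt_card:
  fixes f :: "'a \<Rightarrow> real"
  assumes "finite A" "card B \<le> card A"
    and nonneg: "\<And>j. j \<in> A \<union> B \<Longrightarrow> 0 \<le> f j"
    and dominated: "\<And>j j'. j \<in> B \<Longrightarrow> j' \<in> A \<Longrightarrow> f j \<le> f j'"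
  shows "L2_set f B \<le> sum f A / sqrt (card A)"
proof (cases "finite B \<and> B \<noteq> {}")
  case True
  then have "A \<noteq> {}"
    using assms(1,2) by auto
  define a where "a = real (card A)"
  have a: "a > 0"
    using assms(1) \<open>A \<noteq> {}\<close> by (simp add: a_def card_gt_0_iff)
  have fj: "0 \<le> f j \<and> f j \<le> sum f A / a" if "j \<in> B" for j
  proof -
    have "a * f j \<le> sum f A"
      unfolding a_def using dominated[OF that] by (intro sum_bounded_below)
    then show ?thesis
      using a nonneg that by (simp add: pos_le_divide_eq mult.commute)
  qed
  have "(L2_set f B)\<^sup>2 = (\<Sum>j\<in>B. (f j)\<^sup>2)"
    by (simp add: L2_set_def sum_nonneg)
  also have "\<dots> \<le> real (card B) * (sum f A / a)\<^sup>2"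
    using fj by (intro sum_bounded_above power_mono) auto
  also have "\<dots> \<le> a * (sum f A / a)\<^sup>2"
    using assms(2) by (intro mult_right_mono) (auto simp: a_def)
  also have "\<dots> = (sum f A / sqrt a)\<^sup>2"
    using a by (simp add: power_divide power2_eq_square)
  finally have "(L2_set f B)\<^sup>2 \<le> (sum f A / sqrt a)\<^sup>2" .
  then show ?thesis
    unfolding a_def by (rule power2_le_imp_le) (use nonneg in \<open>auto intro!: divide_nonneg_nonneg sum_nonneg\<close>)
qed (use nonneg in \<open>auto intro!: divide_nonneg_nonneg sum_nonneg\<close>)

definition index_chunk :: "nat \<Rightarrow> nat \<Rightarrow> nat \<Rightarrow> nat set" where
  "index_chunk k n c = {c * k..<c * k + k} \<inter> {..<n}"

lemma card_index_chunk_le: "card (index_chunk k n c) \<le> k"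
  using card_mono[of "{c * k..<c * k + k}" "index_chunk k n c"] by (auto simp: index_chunk_def)

lemma index_chunk_div: "i \<in> index_chunk k n c \<Longrightarrow> i div k = c"
  by (intro div_nat_eqI) (auto simp: index_chunk_def mult.commute)

lemma disjoint_family_index_chunk: "disjoint_family (index_chunk k n)"
  unfolding disjoint_family_on_def using index_chunk_div by blast

lemma UN_index_chunk:
  assumes "0 < k"
  shows "(\<Union>c\<le>n div k. index_chunk k n c) = {..<n}"
proof -
  have "i \<in> index_chunk k n (i div k)" if "i < n" for i
  proof -
    have "i div k * k \<le> i" "i < i div k * k + k"
      using div_mult_mod_eq[of i k] mod_less_divisor[OF assms, of i] by linarith+
    then show ?thesis
      using that by (simp add: index_chunk_def)
  qed
  moreover have "i div k \<le> n div k" if "i < n" for i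
    using that by (simp add: div_le_mono)
  ultimately have "{..<n} \<subseteq> (\<Union>c\<le>n div k. index_chunk k n c)"
    by blast
  then show ?thesis
    by (auto simp: index_chunk_def)
qed

lemma card_index_chunk_full: "index_chunk k n (Suc c) \<noteq> {} \<Longrightarrow> card (index_chunk k n c) = k"
proof -
  assume "index_chunk k n (Suc c) \<noteq> {}"
  then have "index_chunk k n c = {c * k..<c * k + k}"
    by (auto simp: index_chunk_def)
  then show ?thesis
    by simp
qed

lemma sorted_desc_enumeration:
  fixes f :: "'a \<Rightarrow> real"
  assumes "finite A"
  obtains xs where "distinct xs" "set xs = A" "\<And>i i'. i \<le> i' \<Longrightarrow> i' < length xs \<Longrightarrow> f (xs ! i') \<le> f (xs ! i)"
proof -
  obtain ys where ys: "distinct ys" "set ys = A"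
    using finite_distinct_list[OF assms] by blast
  define xs where "xs = sort_key (\<lambda>j. - f j) ys"
  have "sorted (map (\<lambda>j. - f j) xs)"
    unfolding xs_def by (rule sorted_sort_key)
  then have "f (xs ! i') \<le> f (xs ! i)" if "i \<le> i'" "i' < length xs" for i i'
    using that sorted_nth_mono[of "map (\<lambda>j. - f j) xs" i i'] by simp
  moreover have "distinct xs" "set xs = A"
    using ys by (simp_all add: xs_def)
  ultimately show ?thesis
    using that by blast
qed

lemma sorted_chunks:
  fixes f :: "'a \<Rightarrow> real"
  assumes "finite A" "k > 0"
  obtains Ch :: "nat \<Rightarrow> 'a set" and N :: nat where
    "\<And>c. Ch c \<subseteq> A" "\<And>c. card (Ch c) \<le> k" "disjoint_family Ch" "A = (\<Union>c\<le>N. Ch c)"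
    "\<And>c j j'. j \<in> Ch (Suc c) \<Longrightarrow> j' \<in> Ch c \<Longrightarrow> f j \<le> f j'"
    "\<And>c. Ch (Suc c) \<noteq> {} \<Longrightarrow> card (Ch c) = k"
proof -
  obtain xs where xs: "distinct xs" "set xs = A"
    and desc: "\<And>i i'. i \<le> i' \<Longrightarrow> i' < length xs \<Longrightarrow> f (xs ! i') \<le> f (xs ! i)"
    using sorted_desc_enumeration[OF assms(1)] by blast
  define n where "n = length xs"
  define Ch where "Ch c = (\<lambda>i. xs ! i) ` index_chunk k n c" for c
  have inj: "inj_on (\<lambda>i. xs ! i) {..<n}"
    using xs(1) by (auto intro!: inj_onI simp: n_def nth_eq_iff_index_eq)
  have sub: "index_chunk k n c \<subseteq> {..<n}" for c
    by (auto simp: index_chunk_def)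
  have card_Ch: "card (Ch c) = card (index_chunk k n c)" for c
    unfolding Ch_def using inj_on_subset[OF inj sub] by (rule card_image)
  have "Ch c \<subseteq> A" for c
    using xs(2) sub[of c] by (auto simp: Ch_def n_def)
  moreover have "card (Ch c) \<le> k" for c
    using card_index_chunk_le by (simp add: card_Ch)
  moreover have "disjoint_family Ch"
    using disjoint_family_index_chunk[of k n] inj_on_image_Int[OF inj sub sub]
    unfolding Ch_def disjoint_family_on_def by (metis image_empty)
  moreover have "A = (\<Union>c\<le>n div k. Ch c)"
    unfolding Ch_def image_UN[symmetric] UN_index_chunk[OF assms(2)]
    using xs(2) by (auto simp: n_def in_set_conv_nth)
  moreover have "f j \<le> f j'" if "j \<in> Ch (Suc c)" "j' \<in> Ch c" for c j j'
    using that desc by (auto simp: Ch_def index_chunk_def n_def)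
  moreover have "card (Ch c) = k" if "Ch (Suc c) \<noteq> {}" for c
    using that card_index_chunk_full[of k n c] unfolding card_Ch by (simp add: Ch_def)
  ultimately show ?thesis
    by (rule that)
qed

lemma chunks_with_small_tail:
  fixes f :: "'a \<Rightarrow> real"
  assumes "finite A" "k > 0" "\<And>j. j \<in> A \<Longrightarrow> 0 \<le> f j"
  obtains Ch :: "nat \<Rightarrow> 'a set" and N :: nat where
    "\<And>c. Ch c \<subseteq> A" "\<And>c. card (Ch c) \<le> k" "disjoint_family Ch" "A = (\<Union>c\<le>N. Ch c)"
    "(\<Sum>c<N. L2_set f (Ch (Suc c))) \<le> sum f A / sqrt k"
proof -
  obtain Ch N where Ch: "\<And>c. Ch c \<subseteq> A" "\<And>c. card (Ch c) \<le> k" "disjoint_family Ch"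
      "A = (\<Union>c\<le>N. Ch c)" and
    dominated: "\<And>c j j'. j \<in> Ch (Suc c) \<Longrightarrow> j' \<in> Ch c \<Longrightarrow> f j \<le> f j'" and
    full: "\<And>c. Ch (Suc c) \<noteq> {} \<Longrightarrow> card (Ch c) = k"
    using sorted_chunks[OF assms(1,2)] by blast
  have fin: "finite (Ch c)" for c
    using Ch(1) assms(1) by (rule finite_subset)
  have sum_nonneg_Ch: "0 \<le> sum f (Ch c)" for c
    using Ch(1) assms(3) by (auto intro: sum_nonneg)
  have "L2_set f (Ch (Suc c)) \<le> sum f (Ch c) / sqrt k" for c
  proof (cases "Ch (Suc c) = {}")
    case False
    have "L2_set f (Ch (Suc c)) \<le> sum f (Ch c) / sqrt (card (Ch c))"
      by (rule L2_set_le_sum_div_sqrt_card[OF fin])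
        (use Ch(1,2) full[OF False] assms(3) dominated in auto)
    then show ?thesis
      using full[OF False] by simp
  qed (simp add: sum_nonneg_Ch)
  then have "(\<Sum>c<N. L2_set f (Ch (Suc c))) \<le> (\<Sum>c<N. sum f (Ch c)) / sqrt k"
    by (simp add: sum_divide_distrib sum_mono)
  also have "\<dots> \<le> (\<Sum>c\<le>N. sum f (Ch c)) / sqrt k"
    using sum_nonneg_Ch by (intro divide_right_mono sum_mono2) auto
  also have "(\<Sum>c\<le>N. sum f (Ch c)) = sum f A"
    unfolding Ch(4) using Ch(3) fin
    by (intro sum.UNION_disjoint[symmetric]) (auto simp: disjoint_family_on_def)
  finally show ?thesis
    using that Ch by blast
qed

lemma head_tail_partition:
  fixes Ch :: "nat \<Rightarrow> 'a set" and N :: nat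
  assumes "S \<subseteq> U" "\<And>c. Ch c \<subseteq> U - S" "disjoint_family Ch" "U - S = (\<Union>c\<le>N. Ch c)"
  shows "U = (S \<union> Ch 0) \<union> (\<Union>i<N. Ch (Suc i))"
    and "(S \<union> Ch 0) \<inter> (\<Union>i<N. Ch (Suc i)) = {}"
    and "disjoint_family_on (\<lambda>i. Ch (Suc i)) {..<N}"
proof -
  have "U = S \<union> (U - S)"
    using assms(1) by (simp add: Un_absorb1)
  also have "U - S = Ch 0 \<union> (\<Union>i<N. Ch (Suc i))"
    unfolding assms(4) lessThan_Suc_atMost[symmetric] lessThan_Suc_eq_insert_0 by simp
  finally show "U = (S \<union> Ch 0) \<union> (\<Union>i<N. Ch (Suc i))"
    by (simp add: Un_assoc)
  have "S \<inter> Ch c = {}" for c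
    using assms(2)[of c] by blast
  moreover have "Ch 0 \<inter> Ch (Suc i) = {}" for i
    using assms(3) by (simp add: disjoint_family_on_def)
  ultimately show "(S \<union> Ch 0) \<inter> (\<Union>i<N. Ch (Suc i)) = {}"
    by (simp add: Int_Un_distrib2 Int_UN_distrib)
  show "disjoint_family_on (\<lambda>i. Ch (Suc i)) {..<N}"
    using assms(3) by (simp add: disjoint_family_on_def)
qed

lemma cone_head_tail_split:
  fixes f :: "nat \<Rightarrow> real" and k :: nat
  assumes "S \<subseteq> {..<p}" "0 < k"
    and nonneg: "\<And>j. 0 \<le> f j"
    and cone: "(\<Sum>j\<in>{..<p} - S. f j) \<le> (\<Sum>j\<in>S. f j)"
  obtains T :: "nat set" and Ch :: "nat \<Rightarrow> nat set" and N :: nat where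
    "S \<subseteq> T" "T \<subseteq> {..<p}" "card T \<le> card S + k"
    "{..<p} = T \<union> (\<Union>i<N. Ch i)" "T \<inter> (\<Union>i<N. Ch i) = {}" "disjoint_family_on Ch {..<N}"
    "\<forall>i. card (Ch i) \<le> k"
    "sum f S \<le> sqrt (card S) * L2_set f T"
    "(\<Sum>i<N. L2_set f (Ch i)) \<le> sqrt (card S) / sqrt k * L2_set f T"
proof -
  obtain Ch N where Ch: "\<And>c. Ch c \<subseteq> {..<p} - S" "\<And>c. card (Ch c) \<le> k" "disjoint_family Ch"
      "{..<p} - S = (\<Union>c\<le>N. Ch c)"
    and tail: "(\<Sum>c<N. L2_set f (Ch (Suc c))) \<le> sum f ({..<p} - S) / sqrt k"
    using chunks_with_small_tail[of "{..<p} - S" k f] assms(2) nonneg by auto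
  define T where "T = S \<union> Ch 0"
  have ST: "S \<subseteq> T" and Tp: "T \<subseteq> {..<p}"
    using Ch(1) assms(1) by (auto simp: T_def)
  have card_T: "card T \<le> card S + k"
    using card_Un_le[of S "Ch 0"] Ch(2)[of 0] by (simp add: T_def)
  have card_tail: "\<forall>i. card (Ch (Suc i)) \<le> k"
    using Ch(2) by blast
  have "sum f S \<le> sqrt (card S) * L2_set f S"
    by (rule sum_le_sqrt_card_mult_L2_set)
  also have "\<dots> \<le> sqrt (card S) * L2_set f T"
    using L2_set_mono2[OF finite_subset[OF Tp finite_lessThan] ST] by (intro mult_left_mono) auto
  finally have head: "sum f S \<le> sqrt (card S) * L2_set f T" .
  with cone have "sum f ({..<p} - S) / sqrt k \<le> sqrt (card S) * L2_set f T / sqrt k"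
    by (intro divide_right_mono) auto
  with tail have small_tail: "(\<Sum>i<N. L2_set f (Ch (Suc i))) \<le> sqrt (card S) / sqrt k * L2_set f T"
    by simp
  show ?thesis
    by (rule that[OF ST Tp card_T head_tail_partition[OF assms(1) Ch(1,3,4), folded T_def]
          card_tail head small_tail])
qed

lemma exists_chunk_size:
  fixes \<mu> :: real
  assumes "0 < s" "0 < \<mu>" "\<mu> \<le> 1"
  obtains k :: nat where "0 < k" "real s + real k \<le> 16 * real s / \<mu>\<^sup>2" "sqrt s / sqrt k \<le> \<mu> / 2"
proof -
  define u where "u = s / \<mu>\<^sup>2"
  have "\<mu>\<^sup>2 \<le> 1"
    using assms(2,3) by (simp add: power_le_one)
  then have u: "s \<le> u" "1 \<le> u"
    using assms(1,2) by (simp_all add: u_def le_divide_eq)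
  define k where "k = nat \<lceil>4 * u\<rceil>"
  have k: "4 * u \<le> k" "k \<le> 4 * u + 1"
    using u unfolding k_def by linarith+
  have "s / k \<le> s / (4 * u)"
    using k u by (intro divide_left_mono) auto
  also have "\<dots> = (\<mu> / 2)\<^sup>2"
    using assms(1,2) by (simp add: u_def power2_eq_square)
  finally have "sqrt (s / k) \<le> sqrt ((\<mu> / 2)\<^sup>2)"
    by (rule real_sqrt_le_mono)
  then have "sqrt s / sqrt k \<le> \<mu> / 2"
    using assms(2) by (simp add: real_sqrt_divide)
  moreover have "0 < k" "real s + real k \<le> 16 * real s / \<mu>\<^sup>2"
    using u k unfolding u_def by linarith+
  ultimately show ?thesis
    using that by blast
qed

section \<open>The estimation error\<close>

lemma sum_off_support_le_sum_on_support:
  fixes \<theta> \<theta>0 :: "nat \<Rightarrow> nat \<Rightarrow> real"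
  assumes "bnorm1 d dt p \<theta> \<le> bnorm1 d dt p \<theta>0"
    and S: "S = {j. j < p \<and> block_fro d dt \<theta>0 j 0 \<noteq> 0}"
  shows "(\<Sum>j\<in>{..<p} - S. block_fro d dt (mdiff \<theta> \<theta>0) j 0) \<le> (\<Sum>j\<in>S. block_fro d dt (mdiff \<theta> \<theta>0) j 0)"
proof -
  define f where "f j = block_fro d dt (mdiff \<theta> \<theta>0) j 0" for j
  define h where "h j = block_fro d dt \<theta> j 0" for j
  define t where "t j = block_fro d dt \<theta>0 j 0" for j
  have split: "sum g {..<p} = sum g ({..<p} - S) + sum g S" for g :: "nat \<Rightarrow> real"
    using S by (intro sum.subset_diff) auto
  have "f j \<le> h j" if "j \<in> {..<p} - S" for j
    using that block_fro_diff_le[of d dt \<theta> \<theta>0 j 0] by (simp add: S f_def h_def mdiff_def)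
  moreover have "t j - f j \<le> h j" for j
    using block_fro_le_mdiff_add[of d dt \<theta>0 j 0 \<theta>] block_fro_mdiff_commute[of d dt \<theta>0 \<theta> j 0]
    by (simp add: f_def h_def t_def)
  ultimately have "(\<Sum>j\<in>{..<p} - S. f j) + (\<Sum>j\<in>S. t j - f j) \<le> sum h ({..<p} - S) + sum h S"
    by (intro add_mono sum_mono) auto
  also have "\<dots> = bnorm1 d dt p \<theta>"
    by (simp add: bnorm1_def split h_def)
  also have "\<dots> \<le> sum t ({..<p} - S) + sum t S"
    using assms(1) by (simp add: bnorm1_def split t_def)
  also have "sum t ({..<p} - S) = 0"
    by (simp add: S t_def)
  finally show ?thesis
    by (simp add: f_def sum_subtractf)
qed

lemma G_mult_mdiff_eq:
  assumes "gfun G g0 n \<theta>0 r k + R r k = 0"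
  shows "(\<Sum>c<n. G r c * mdiff \<theta> \<theta>0 c k)
    = gfun Gh gh0 n \<theta> r k - (\<Sum>c<n. mdiff Gh G r c * \<theta> c k) - mdiff gh0 g0 r k + R r k"
proof -
  have "(\<Sum>c<n. G r c * mdiff \<theta> \<theta>0 c k) = (\<Sum>c<n. G r c * \<theta> c k) - (\<Sum>c<n. G r c * \<theta>0 c k)"
    by (simp add: mdiff_def right_diff_distrib sum_subtractf)
  moreover have "(\<Sum>c<n. mdiff Gh G r c * \<theta> c k) = (\<Sum>c<n. Gh r c * \<theta> c k) - (\<Sum>c<n. G r c * \<theta> c k)"
    by (simp add: mdiff_def left_diff_distrib sum_subtractf)
  ultimately show ?thesis
    using assms by (simp add: gfun_def mdiff_def)
qed

lemma block_fro_G_mult_mdiff_le: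
  assumes "i < q"
    and model: "\<forall>r < q * d. \<forall>k < dt. gfun G g0 (p * d) \<theta>0 r k + R r k = 0"
    and "bmax d d q p (mdiff Gh G) \<le> \<epsilon>1" "bmax d dt q 1 (mdiff gh0 g0) \<le> \<epsilon>1" "bmax d dt q 1 R \<le> \<epsilon>2"
    and "bmax d dt q 1 (gfun Gh gh0 (p * d) \<theta>) \<le> \<gamma>" "bnorm1 d dt p \<theta> \<le> K" "0 \<le> \<epsilon>1"
  shows "block_fro d dt (\<lambda>r k. \<Sum>c<p * d. G r c * mdiff \<theta> \<theta>0 c k) i 0 \<le> \<gamma> + (K + 1) * \<epsilon>1 + \<epsilon>2"
proof -
  define gh where "gh = gfun Gh gh0 (p * d) \<theta>"
  define E where "E r k = (\<Sum>c<p * d. mdiff Gh G r c * \<theta> c k)" for r k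
  have rows: "i * d + a < q * d" if "a < d" for a
  proof -
    have "i * d + a < (i + 1) * d" using that by simp
    also have "\<dots> \<le> q * d" using assms(1) by (intro mult_right_mono) auto
    finally show ?thesis .
  qed
  have "block_fro d dt (\<lambda>r k. \<Sum>c<p * d. G r c * mdiff \<theta> \<theta>0 c k) i 0
      = block_fro d dt (\<lambda>r k. (gh r k - E r k - mdiff gh0 g0 r k) + R r k) i 0"
    using model rows by (intro block_fro_cong) (simp add: G_mult_mdiff_eq gh_def E_def)
  also have "\<dots> \<le> block_fro d dt gh i 0 + block_fro d dt E i 0 + block_fro d dt (mdiff gh0 g0) i 0
      + block_fro d dt R i 0"
    using block_fro_add_le[of d dt "\<lambda>r k. gh r k - E r k - mdiff gh0 g0 r k" R i 0]
      block_fro_diff_le[of d dt "\<lambda>r k. gh r k - E r k" "mdiff gh0 g0" i 0]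
      block_fro_diff_le[of d dt gh E i 0]
    by linarith
  also have "\<dots> \<le> \<gamma> + K * \<epsilon>1 + \<epsilon>1 + \<epsilon>2"
  proof -
    have "block_fro d dt E i 0 \<le> bmax d d q p (mdiff Gh G) * bnorm1 d dt p \<theta>"
      unfolding E_def using assms(1) by (rule block_fro_mult_le_bmax_mult_bnorm1)
    also have "\<dots> \<le> \<epsilon>1 * K"
      using assms by (intro mult_mono) (auto simp: bnorm1_def sum_nonneg)
    finally show ?thesis
      using assms block_fro_le_bmax[OF assms(1), of 0 1 d dt gh]
        block_fro_le_bmax[OF assms(1), of 0 1 d dt "mdiff gh0 g0"] block_fro_le_bmax[OF assms(1), of 0 1 d dt R]
      unfolding gh_def by (simp add: mult.commute)
  qed
  finally show ?thesis
    by (simp add: algebra_simps)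
qed

lemma sum_support_le_of_head_le:
  fixes x X \<sigma> \<mu> c5 \<rho> :: real
  assumes "0 < \<mu>" "0 < c5" "c5 \<le> \<sigma>" "0 \<le> \<rho>"
    and support: "x \<le> sqrt s * X"
    and head: "\<mu> * \<sigma> * X \<le> sqrt (16 * real s / \<mu>\<^sup>2) * \<rho> + \<sigma> * (\<mu> / 2 * X)"
  shows "x \<le> 8 / c5 * real s / \<mu>\<^sup>2 * \<rho>"
proof -
  have "sqrt (16 * real s / \<mu>\<^sup>2) = 4 * sqrt s / \<mu>"
    using assms(1) by (simp add: real_sqrt_divide real_sqrt_mult)
  moreover have "\<sigma> * (\<mu> / 2 * X) = \<mu> * \<sigma> * X / 2"
    by simp
  ultimately have "\<mu> * \<sigma> * X \<le> 4 * sqrt s / \<mu> * \<rho> + \<mu> * \<sigma> * X / 2"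
    using head by (simp only:)
  then have head': "\<mu> * \<sigma> * X \<le> 2 * (4 * sqrt s / \<mu> * \<rho>)"
    by linarith
  have "\<mu> * \<sigma> * x \<le> \<mu> * \<sigma> * (sqrt s * X)"
    using support assms(1-3) by (intro mult_left_mono) auto
  also have "\<dots> = sqrt s * (\<mu> * \<sigma> * X)"
    by (simp add: algebra_simps)
  also have "\<dots> \<le> sqrt s * (2 * (4 * sqrt s / \<mu> * \<rho>))"
    using head' by (intro mult_left_mono) auto
  also have "\<dots> = 8 * real s / \<mu> * \<rho>"
    by simp
  finally have "x * (\<mu> * \<sigma>) \<le> 8 * real s / \<mu> * \<rho>"
    by (simp add: mult.commute)
  then have "x \<le> 8 * real s / \<mu> * \<rho> / (\<mu> * \<sigma>)"
    using assms(1-3) by (subst pos_le_divide_eq) auto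
  also have "\<dots> = 8 * real s * \<rho> / (\<mu>\<^sup>2 * \<sigma>)"
    by (simp add: power2_eq_square)
  also have "\<dots> \<le> 8 * real s * \<rho> / (\<mu>\<^sup>2 * c5)"
    using assms by (intro divide_left_mono mult_left_mono) auto
  finally show ?thesis
    by (simp add: mult.commute)
qed

lemma sum_on_support_le:
  fixes \<Delta> G :: "nat \<Rightarrow> nat \<Rightarrow> real" and \<mu> c5 \<rho> :: real
  assumes "1 \<le> d" "1 \<le> p" "S \<subseteq> {..<p}" "card S = s" "0 < s"
    and cone: "(\<Sum>j\<in>{..<p} - S. block_fro d dt \<Delta> j 0) \<le> (\<Sum>j\<in>S. block_fro d dt \<Delta> j 0)"
    and residual: "\<And>i. i < q \<Longrightarrow> block_fro d dt (\<lambda>r k. \<Sum>c<p * d. G r c * \<Delta> c k) i 0 \<le> \<rho>"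
    and "0 \<le> \<rho>" "0 < \<mu>" "0 < c5"
    and sigma_max: "c5 \<le> sigma_max_m d p q (16 * real s / \<mu>\<^sup>2) G"
    and ratio: "\<mu> \<le> sigma_min_m d p q (16 * real s / \<mu>\<^sup>2) G / sigma_max_m d p q (16 * real s / \<mu>\<^sup>2) G"
  shows "(\<Sum>j\<in>S. block_fro d dt \<Delta> j 0) \<le> 8 / c5 * real s / \<mu>\<^sup>2 * \<rho>"
proof -
  define m where "m = 16 * real s / \<mu>\<^sup>2"
  define \<sigma> where "\<sigma> = sigma_max_m d p q m G"
  define f where "f = (\<lambda>j. block_fro d dt \<Delta> j 0)"
  have \<sigma>: "0 < \<sigma>" "c5 \<le> \<sigma>"
    using sigma_max \<open>0 < c5\<close> by (simp_all add: \<sigma>_def m_def)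
  have sigma_min: "\<mu> * \<sigma> \<le> sigma_min_m d p q m G"
    using ratio \<sigma> by (simp add: \<sigma>_def m_def pos_le_divide_eq)
  have "\<mu> \<le> 1"
    using le_one_of_le_sigma_ratio[OF assms(1,2)] \<sigma>(1) ratio by (simp add: \<sigma>_def m_def)
  then obtain k where k: "0 < k" "real s + real k \<le> m" "sqrt s / sqrt k \<le> \<mu> / 2"
    unfolding m_def by (rule exists_chunk_size[OF \<open>0 < s\<close> \<open>0 < \<mu>\<close>])
  obtain T Ch and N :: nat where ST: "S \<subseteq> T" and card_T: "card T \<le> s + k"
    and part: "{..<p} = T \<union> (\<Union>i<N. Ch i)" "T \<inter> (\<Union>i<N. Ch i) = {}" "disjoint_family_on Ch {..<N}"
    and card_Ch: "\<forall>i. card (Ch i) \<le> k"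
    and support: "sum f S \<le> sqrt s * L2_set f T"
    and tail: "(\<Sum>i<N. L2_set f (Ch i)) \<le> sqrt s / sqrt k * L2_set f T"
    by (rule cone_head_tail_split[OF assms(3) k(1) _ cone[folded f_def], unfolded assms(4)])
      (simp add: f_def)
  have "real (card T) \<le> m"
    using card_T k(2) by (simp add: order_trans[OF of_nat_mono])
  moreover have "\<forall>i. real (card (Ch i)) \<le> m"
  proof
    fix i
    have "real (card (Ch i)) \<le> real k"
      using card_Ch by simp
    then show "real (card (Ch i)) \<le> m"
      using k(2) of_nat_0_le_iff[of s] by linarith
  qed
  moreover have "T \<noteq> {}" "0 \<le> m"
    using ST assms(4,5) by (auto simp: m_def)
  ultimately have "\<mu> * \<sigma> * L2_set f T \<le> sqrt m * \<rho> + \<sigma> * (\<Sum>i<N. L2_set f (Ch i))"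
    unfolding f_def \<sigma>_def using \<sigma> \<open>0 < \<mu>\<close> \<open>0 \<le> \<rho>\<close> sigma_min residual
    by (intro L2_set_head_le_sigma_max_m[OF part]) (auto simp: \<sigma>_def)
  also have "\<dots> \<le> sqrt m * \<rho> + \<sigma> * (\<mu> / 2 * L2_set f T)"
  proof -
    have "sqrt s / sqrt k * L2_set f T \<le> \<mu> / 2 * L2_set f T"
      by (rule mult_right_mono[OF k(3)]) simp
    then have "(\<Sum>i<N. L2_set f (Ch i)) \<le> \<mu> / 2 * L2_set f T"
      using tail by linarith
    then show ?thesis
      using \<sigma>(1) by (intro add_left_mono mult_left_mono) auto
  qed
  finally show ?thesis
    using sum_support_le_of_head_le[OF \<open>0 < \<mu>\<close> \<open>0 < c5\<close> \<sigma>(2) \<open>0 \<le> \<rho>\<close> support] by (simp add: f_def m_def)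
qed

lemma block_rmd_error_le:
  fixes \<theta>0 \<theta>h G g0 R Gh gh0 :: "nat \<Rightarrow> nat \<Rightarrow> real"
  assumes "1 \<le> p" "1 \<le> d" "0 < c5"
    and s: "s = card {j. j < p \<and> block_fro d dt \<theta>0 j 0 \<noteq> 0}"
    and model: "\<forall>i < q * d. \<forall>k < dt. gfun G g0 (p * d) \<theta>0 i k + R i k = 0"
    and "0 \<le> \<epsilon>1" "0 \<le> \<epsilon>2" "0 \<le> \<gamma>"
    and errors: "bmax d d q p (mdiff Gh G) \<le> \<epsilon>1" "bmax d dt q 1 (mdiff gh0 g0) \<le> \<epsilon>1"
      "bmax d dt q 1 R \<le> \<epsilon>2"
    and feasible: "bmax d dt q 1 (gfun Gh gh0 (p * d) \<theta>0) \<le> \<gamma>"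
    and "0 < \<mu>"
    and sigma: "c5 \<le> sigma_max_m d p q (16 * real s / \<mu>\<^sup>2) G"
      "\<mu> \<le> sigma_min_m d p q (16 * real s / \<mu>\<^sup>2) G / sigma_max_m d p q (16 * real s / \<mu>\<^sup>2) G"
    and K: "bnorm1 d dt p \<theta>0 \<le> K"
    and rmd: "is_block_rmd p q d dt Gh gh0 \<gamma> \<theta>h"
  shows "bnorm1 d dt p (mdiff \<theta>h \<theta>0) \<le> 16 / c5 * real s / \<mu>\<^sup>2 * (\<gamma> + (K + 1) * \<epsilon>1 + \<epsilon>2)"
proof -
  define S where "S = {j. j < p \<and> block_fro d dt \<theta>0 j 0 \<noteq> 0}"
  define f where "f = (\<lambda>j. block_fro d dt (mdiff \<theta>h \<theta>0) j 0)"
  have "bmax d dt q 1 (gfun Gh gh0 (p * d) \<theta>h) \<le> \<gamma>" and shorter: "bnorm1 d dt p \<theta>h \<le> bnorm1 d dt p \<theta>0"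
    using rmd feasible unfolding is_block_rmd_def by auto
  have cone: "sum f ({..<p} - S) \<le> sum f S"
    unfolding f_def by (rule sum_off_support_le_sum_on_support[OF shorter S_def])
  have "bnorm1 d dt p (mdiff \<theta>h \<theta>0) = sum f ({..<p} - S) + sum f S"
    unfolding bnorm1_def f_def[symmetric] by (rule sum.subset_diff) (auto simp: S_def)
  also have "\<dots> \<le> 2 * sum f S"
    using cone by simp
  also have "\<dots> \<le> 2 * (8 / c5 * real s / \<mu>\<^sup>2 * (\<gamma> + (K + 1) * \<epsilon>1 + \<epsilon>2))"
  proof (cases "s = 0")
    case True
    then have "S = {}"
      by (simp add: s S_def)
    then show ?thesis
      using True by simp
  next
    case False
    have support: "S \<subseteq> {..<p}" "card S = s" "0 < s"
      using False by (auto simp: S_def s[symmetric])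
    have "0 \<le> K"
      using K by (metis bnorm1_def block_fro_nonneg sum_nonneg order_trans)
    have "bnorm1 d dt p \<theta>h \<le> K"
      using shorter K by linarith
    then have residual: "block_fro d dt (\<lambda>r k. \<Sum>c<p * d. G r c * mdiff \<theta>h \<theta>0 c k) i 0
        \<le> \<gamma> + (K + 1) * \<epsilon>1 + \<epsilon>2" if "i < q" for i
      using that model errors \<open>bmax d dt q 1 (gfun Gh gh0 (p * d) \<theta>h) \<le> \<gamma>\<close> \<open>0 \<le> \<epsilon>1\<close>
      by (intro block_fro_G_mult_mdiff_le) auto
    have "sum f S \<le> 8 / c5 * real s / \<mu>\<^sup>2 * (\<gamma> + (K + 1) * \<epsilon>1 + \<epsilon>2)"
      unfolding f_def using assms(1-3,6-8) \<open>0 < \<mu>\<close> \<open>0 \<le> K\<close>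
      by (intro sum_on_support_le[OF _ _ support cone[unfolded f_def] residual _ _ _ sigma]) auto
    then show ?thesis
      by simp
  qed
  finally show ?thesis
    by simp
qed

lemma prob_Int_ge:
  assumes "prob_space M" "A \<in> sets M" "B \<in> sets M"
  shows "measure M A + measure M B - 1 \<le> measure M (A \<inter> B)"
proof -
  interpret prob_space M by fact
  have "measure M (A \<union> B) = measure M A + measure M B - measure M (A \<inter> B)"
    using assms by (intro measure_Un3) (auto simp: fmeasurable_eq_sets)
  moreover have "measure M (A \<union> B) \<le> 1"
    by (rule prob_le_1)
  ultimately show ?thesis
    by simp
qed

theorem theorem3:
  fixes c5 C1 :: real
  assumes "c5 > 0" and "C1 > 0"
  shows "\<exists>C2::real. \<forall>(M :: 'a measure) p d dt L q (\<theta>0 :: nat \<Rightarrow> nat \<Rightarrow> real) G g0 R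
      (Gh :: 'a \<Rightarrow> nat \<Rightarrow> nat \<Rightarrow> real) (gh0 :: 'a \<Rightarrow> nat \<Rightarrow> nat \<Rightarrow> real)
      \<epsilon>1 \<delta>1 \<epsilon>2 \<delta>2 \<gamma> \<mu> K s.
    prob_space M \<longrightarrow>
    p \<ge> 1 \<longrightarrow> d \<ge> 1 \<longrightarrow> dt \<ge> 1 \<longrightarrow> L \<ge> 1 \<longrightarrow> q = p * L \<longrightarrow>
    s = card {j. j < p \<and> block_fro d dt \<theta>0 j 0 \<noteq> 0} \<longrightarrow>
    (\<forall>i < q * d. \<forall>k < dt. gfun G g0 (p * d) \<theta>0 i k + R i k = 0) \<longrightarrow>
    \<comment> \<open>(B1)\<close>
    \<epsilon>1 > 0 \<longrightarrow> \<delta>1 > 0 \<longrightarrow>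
    (\<exists>E \<in> sets M. measure M E \<ge> 1 - \<delta>1 \<and>
        (\<forall>\<omega> \<in> E. bmax d d q p (mdiff (Gh \<omega>) G) \<le> \<epsilon>1 \<and>
                   bmax d dt q 1 (mdiff (gh0 \<omega>) g0) \<le> \<epsilon>1)) \<longrightarrow>
    \<comment> \<open>(B2)\<close>
    \<epsilon>2 > 0 \<longrightarrow> bmax d dt q 1 R \<le> \<epsilon>2 \<longrightarrow>
    \<comment> \<open>(B3)\<close>
    \<gamma> \<ge> 0 \<longrightarrow> \<delta>2 > 0 \<longrightarrow>
    (\<exists>E \<in> sets M. measure M E \<ge> 1 - \<delta>2 \<and>
        (\<forall>\<omega> \<in> E. bmax d dt q 1 (gfun (Gh \<omega>) (gh0 \<omega>) (p * d) \<theta>0) \<le> \<gamma>)) \<longrightarrow>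
    \<comment> \<open>(B4)\<close>
    \<mu> > 0 \<longrightarrow>
    sigma_max_m d p q (16 * real s / \<mu>\<^sup>2) G \<ge> c5 \<longrightarrow>
    sigma_min_m d p q (16 * real s / \<mu>\<^sup>2) G / sigma_max_m d p q (16 * real s / \<mu>\<^sup>2) G \<ge> \<mu> \<longrightarrow>
    \<comment> \<open>size of theta0 and choice of gamma\<close>
    bnorm1 d dt p \<theta>0 \<le> K \<longrightarrow>
    \<gamma> \<le> C1 * ((K + 1) * \<epsilon>1 + \<epsilon>2) \<longrightarrow>
    (\<exists>E \<in> sets M. measure M E \<ge> 1 - (\<delta>1 + \<delta>2) \<and>
        (\<forall>\<omega> \<in> E. \<forall>\<theta>h. is_block_rmd p q d dt (Gh \<omega>) (gh0 \<omega>) \<gamma> \<theta>h \<longrightarrow>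
           bnorm1 d dt p (mdiff \<theta>h \<theta>0) \<le> C2 * real s / \<mu>\<^sup>2 * ((K + 1) * \<epsilon>1 + \<epsilon>2)))"
proof (intro exI[of _ "16 * (C1 + 1) / c5"] allI impI, goal_cases)
  case (1 M p d dt L q \<theta>0 G g0 R Gh gh0 \<epsilon>1 \<delta>1 \<epsilon>2 \<delta>2 \<gamma> \<mu> K s)
  obtain E1 where E1: "E1 \<in> sets M" "1 - \<delta>1 \<le> measure M E1"
    and B1: "\<And>\<omega>. \<omega> \<in> E1 \<Longrightarrow> bmax d d q p (mdiff (Gh \<omega>) G) \<le> \<epsilon>1 \<and> bmax d dt q 1 (mdiff (gh0 \<omega>) g0) \<le> \<epsilon>1"
    using 1 by blast
  obtain E2 where E2: "E2 \<in> sets M" "1 - \<delta>2 \<le> measure M E2"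
    and B3: "\<And>\<omega>. \<omega> \<in> E2 \<Longrightarrow> bmax d dt q 1 (gfun (Gh \<omega>) (gh0 \<omega>) (p * d) \<theta>0) \<le> \<gamma>"
    using 1 by blast
  have "bnorm1 d dt p (mdiff \<theta>h \<theta>0) \<le> 16 * (C1 + 1) / c5 * real s / \<mu>\<^sup>2 * ((K + 1) * \<epsilon>1 + \<epsilon>2)"
    if "\<omega> \<in> E1 \<inter> E2" "is_block_rmd p q d dt (Gh \<omega>) (gh0 \<omega>) \<gamma> \<theta>h" for \<omega> \<theta>h
  proof -
    have "bnorm1 d dt p (mdiff \<theta>h \<theta>0) \<le> 16 / c5 * real s / \<mu>\<^sup>2 * (\<gamma> + (K + 1) * \<epsilon>1 + \<epsilon>2)"
      by (rule block_rmd_error_le) (use 1 B1 B3 that assms in auto)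
    also have "\<dots> \<le> 16 / c5 * real s / \<mu>\<^sup>2 * ((C1 + 1) * ((K + 1) * \<epsilon>1 + \<epsilon>2))"
      using 1 assms by (intro mult_left_mono) (auto simp: algebra_simps)
    finally show ?thesis
      by (simp add: field_simps)
  qed
  moreover have "1 - (\<delta>1 + \<delta>2) \<le> measure M (E1 \<inter> E2)"
    using prob_Int_ge[OF _ E1(1) E2(1)] E1(2) E2(2) 1 by linarith
  ultimately show ?case
    using E1(1) E2(1) by blast
qed

end
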